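(* Let $\alpha\in(0,1)$, $0<\kappa<1/\alpha$, $0<\varepsilon<M$, and let $(\tau_x)_{x\in\mathbb N}$ be i.i.d. positive random variables with $\lim_{u\to\infty}u^\alpha\mathbb P[\tau_x\ge u]=1$. For $0\le a<b\le\infty$ set $T_a^b(n)=\{x\in\{1,\dots,n\}:\tau_x/n^\kappa\in[a,b)\}$. Then there exists a function $h$ with $h(n)\to0$ as $n\to\infty$ such that, $\boldsymbol\tau$-a.s., \[\lim_{n\to\infty}\ \sup_{u\in[\varepsilon,M)\cap h(n)\mathbb Z}\ \Big|\frac{|T_u^{u+h(n)}(n)|}{h(n)\,n^{1-\alpha\kappa}}-\alpha u^{-\alpha-1}\Big|=0.\] *)

theory Defs
  imports "HOL-Probability.Probability"
begin

definition T_set :: "real \<Rightarrow> (nat \<Rightarrow> real) \<Rightarrow> real \<Rightarrow> ereal \<Rightarrow> nat \<Rightarrow> nat set" where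
  "T_set \<kappa> t a b n = {x \<in> {1..n}. a \<le> t x / real n powr \<kappa> \<and> ereal (t x / real n powr \<kappa>) < b}"

end

theory Submission
  imports Defs "HOL-Real_Asymp.Real_Asymp"
begin

(*
  For a lattice point u, the count |T_u^{u+h}(n)| is a sum of n i.i.d. indicators whose mean is
  n (P[tau >= u n^kappa] - P[tau >= (u+h) n^kappa]). The tail asymptotics make this mean equal to
  h n^(1 - alpha kappa) (alpha u^(-alpha-1) + o(1)) uniformly in u >= epsilon, provided the mesh h
  tends to 0 more slowly than the relative tail error at level epsilon n^kappa. If moreover
  h >= (n+1)^(-gamma) with 3 gamma < 1 - alpha kappa, the means grow polynomially; a multiplicative
  Chernoff bound with relative accuracy (n+1)^(-gamma), a union bound over the O(n^gamma) lattice
  points in [epsilon, M) and Borel-Cantelli then give almost sure concentration at all of them at once.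
*)

section \<open>A multiplicative Chernoff bound\<close>

lemma exp_le_one_plus_x_plus_square:
  fixes x :: real
  assumes "\<bar>x\<bar> \<le> 1"
  shows "exp x \<le> 1 + x + x\<^sup>2"
proof (cases "0 \<le> x")
  case True
  then show ?thesis using assms exp_bound by simp
next
  case False
  have "1 - x \<le> exp (- x)"
    using exp_ge_add_one_self[of "- x"] by simp
  then have "exp x \<le> 1 / (1 - x)"
    using False by (simp add: exp_minus field_simps)
  also have "\<dots> \<le> 1 + x + x\<^sup>2"
  proof -
    have "x * (x * x) \<le> 0"
      using False by (intro mult_nonpos_nonneg) auto
    then have "1 \<le> (1 + x + x\<^sup>2) * (1 - x)"
      by (simp add: algebra_simps power2_eq_square)
    then show ?thesis using False by (simp add: field_simps)
  qed
  finally show ?thesis .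
qed

lemma power_one_plus_le_exp:
  fixes x :: real
  assumes "0 \<le> 1 + x"
  shows "(1 + x) ^ n \<le> exp (real n * x)"
proof -
  have "(1 + x) ^ n \<le> exp x ^ n"
    using assms by (intro power_mono) (auto simp: add.commute exp_ge_add_one_self)
  then show ?thesis
    by (simp add: exp_of_nat_mult)
qed

lemma (in prob_space) indep_vars_borel_measurable:
  "indep_vars (\<lambda>_. borel) X I \<Longrightarrow> i \<in> I \<Longrightarrow> X i \<in> borel_measurable M"
  unfolding indep_vars_def by blast

lemma (in prob_space) prob_eq_of_distr_eq:
  fixes X Y :: "'a \<Rightarrow> real"
  assumes "X \<in> borel_measurable M" "Y \<in> borel_measurable M"
    and "distr M borel X = distr M borel Y" and "A \<in> sets borel"
  shows "prob {\<omega>\<in>space M. X \<omega> \<in> A} = prob {\<omega>\<in>space M. Y \<omega> \<in> A}"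
proof -
  have "prob {\<omega>\<in>space M. X \<omega> \<in> A} = measure (distr M borel X) A"
    using assms(1,4) by (simp add: measure_distr vimage_def Int_def conj_commute)
  also have "\<dots> = measure (distr M borel Y) A"
    using assms(3) by simp
  also have "\<dots> = prob {\<omega>\<in>space M. Y \<omega> \<in> A}"
    using assms(2,4) by (simp add: measure_distr vimage_def Int_def conj_commute)
  finally show ?thesis .
qed

lemma (in prob_space) expectation_exp_indicator:
  fixes X :: "'a \<Rightarrow> real"
  assumes X: "X \<in> borel_measurable M" and B: "B \<in> sets borel"
  shows "integrable M (\<lambda>\<omega>. exp (c * indicator B (X \<omega>)))"
    and "expectation (\<lambda>\<omega>. exp (c * indicator B (X \<omega>)))
           = 1 + prob {\<omega>\<in>space M. X \<omega> \<in> B} * (exp c - 1)"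
proof -
  let ?A = "{\<omega>\<in>space M. X \<omega> \<in> B}"
  have A: "?A \<in> sets M"
    using X B by measurable
  have "(\<lambda>t. exp (c * indicator B t)) \<in> borel_measurable borel"
    using B by measurable
  then show "integrable M (\<lambda>\<omega>. exp (c * indicator B (X \<omega>)))"
    using X by (intro integrable_const_bound[where B = "exp \<bar>c\<bar>"])
      (auto simp: indicator_def intro: measurable_compose)
  have "expectation (\<lambda>\<omega>. exp (c * indicator B (X \<omega>)))
      = expectation (\<lambda>\<omega>. 1 + (exp c - 1) * indicator ?A \<omega>)"
    by (intro Bochner_Integration.integral_cong) (auto simp: indicator_def)
  also have "\<dots> = 1 + (exp c - 1) * prob ?A"
  proof -
    have "integrable M (\<lambda>\<omega>. (exp c - 1) * indicator ?A \<omega>)"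
      using A by (intro integrable_mult_right integrable_real_indicator) (auto simp: emeasure_eq_measure)
    then show ?thesis
      using A by (subst Bochner_Integration.integral_add) (auto simp: prob_space)
  qed
  finally show "expectation (\<lambda>\<omega>. exp (c * indicator B (X \<omega>))) = 1 + prob ?A * (exp c - 1)"
    by (simp add: mult.commute)
qed

lemma (in prob_space) expectation_exp_indicator_sum_le:
  fixes X :: "'i \<Rightarrow> 'a \<Rightarrow> real"
  assumes I: "finite I" and indep: "indep_vars (\<lambda>_. borel) X I"
    and B: "B \<in> sets borel"
    and p: "\<And>i. i \<in> I \<Longrightarrow> prob {\<omega>\<in>space M. X i \<omega> \<in> B} = p"
  shows "integrable M (\<lambda>\<omega>. exp (c * (\<Sum>i\<in>I. indicator B (X i \<omega>))))"
    and "expectation (\<lambda>\<omega>. exp (c * (\<Sum>i\<in>I. indicator B (X i \<omega>))))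
           \<le> exp (real (card I) * p * (exp c - 1))"
proof -
  define Z where "Z i \<omega> = exp (c * indicator B (X i \<omega>))" for i \<omega>
  have prod_Z: "exp (c * (\<Sum>i\<in>I. indicator B (X i \<omega>))) = (\<Prod>i\<in>I. Z i \<omega>)" for \<omega>
    unfolding Z_def sum_distrib_left by (rule exp_sum[OF I])
  have "(\<lambda>t. exp (c * indicator B t)) \<in> borel_measurable borel"
    using B by measurable
  then have indep_Z: "indep_vars (\<lambda>_. borel) Z I"
    unfolding Z_def by (intro indep_vars_compose2[OF indep]) auto
  have integrable_Z: "integrable M (Z i)"
    and expectation_Z: "expectation (Z i) = 1 + p * (exp c - 1)" if "i \<in> I" for i
    using expectation_exp_indicator[OF indep_vars_borel_measurable[OF indep that] B, of c] p[OF that]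
    unfolding Z_def by simp_all
  show "integrable M (\<lambda>\<omega>. exp (c * (\<Sum>i\<in>I. indicator B (X i \<omega>))))"
    unfolding prod_Z using indep_vars_integrable[OF I indep_Z integrable_Z] by simp
  have "expectation (\<lambda>\<omega>. exp (c * (\<Sum>i\<in>I. indicator B (X i \<omega>)))) = (\<Prod>i\<in>I. expectation (Z i))"
    unfolding prod_Z using indep_vars_lebesgue_integral[OF I indep_Z integrable_Z] by simp
  also have "\<dots> = (1 + p * (exp c - 1)) ^ card I"
    using expectation_Z by simp
  also have "\<dots> \<le> exp (real (card I) * (p * (exp c - 1)))"
  proof (cases "I = {}")
    case False
    then obtain i where "i \<in> I" by auto
    have "0 \<le> expectation (Z i)"
      by (intro Bochner_Integration.integral_nonneg) (simp add: Z_def)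
    then show ?thesis
      using expectation_Z[OF \<open>i \<in> I\<close>] by (intro power_one_plus_le_exp) simp
  qed simp
  finally show "expectation (\<lambda>\<omega>. exp (c * (\<Sum>i\<in>I. indicator B (X i \<omega>))))
      \<le> exp (real (card I) * p * (exp c - 1))"
    by (simp add: mult.assoc)
qed

lemma (in prob_space) prob_indicator_sum_exp_tail:
  fixes X :: "'i \<Rightarrow> 'a \<Rightarrow> real"
  assumes "finite I" and indep: "indep_vars (\<lambda>_. borel) X I"
    and "B \<in> sets borel"
    and "\<And>i. i \<in> I \<Longrightarrow> prob {\<omega>\<in>space M. X i \<omega> \<in> B} = p"
  shows "prob {\<omega>\<in>space M. t \<le> c * (\<Sum>i\<in>I. indicator B (X i \<omega>))}
           \<le> exp (real (card I) * p * (exp c - 1) - t)"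
proof -
  let ?E = "\<lambda>\<omega>. exp (c * (\<Sum>i\<in>I. indicator B (X i \<omega>)))"
  have "prob {\<omega>\<in>space M. t \<le> c * (\<Sum>i\<in>I. indicator B (X i \<omega>))} = prob {\<omega>\<in>space M. exp t \<le> ?E \<omega>}"
    by simp
  also have "\<dots> \<le> expectation ?E / exp t"
    by (rule integral_Markov_inequality_measure[where A = "space M"])
       (use expectation_exp_indicator_sum_le(1)[OF assms] in auto)
  also have "\<dots> \<le> exp (real (card I) * p * (exp c - 1)) / exp t"
    using expectation_exp_indicator_sum_le(2)[OF assms] by (intro divide_right_mono) auto
  finally show ?thesis
    by (simp add: exp_diff)
qed

lemma chernoff_exponent_le:
  fixes c d \<mu> :: real
  assumes "\<bar>c\<bar> = d / 2" "d \<le> 2" "0 \<le> \<mu>"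
  shows "\<mu> * (exp c - 1) - (c * \<mu> + d / 2 * d * \<mu>) \<le> - (d\<^sup>2 * \<mu> / 4)"
proof -
  have "c\<^sup>2 = d\<^sup>2 / 4"
    using power2_abs[of c] assms(1) by (simp add: power_divide)
  moreover have "exp c - 1 - c \<le> c\<^sup>2"
    using exp_le_one_plus_x_plus_square[of c] assms(1,2) by simp
  ultimately have "\<mu> * (exp c - 1 - c) \<le> \<mu> * (d\<^sup>2 / 4)"
    using assms(3) by (intro mult_left_mono) auto
  moreover have "\<mu> * (exp c - 1) - (c * \<mu> + d / 2 * d * \<mu>) = \<mu> * (exp c - 1 - c) - 2 * (\<mu> * (d\<^sup>2 / 4))"
    by (simp add: algebra_simps power2_eq_square)
  ultimately show ?thesis
    by (simp add: mult.commute)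
qed

lemma two_sided_deviation_cases:
  fixes d \<mu> S :: real
  assumes "0 < d" "d * \<mu> \<le> \<bar>S - \<mu>\<bar>"
  shows "d / 2 * \<mu> + d / 2 * d * \<mu> \<le> d / 2 * S \<or> - d / 2 * \<mu> + d / 2 * d * \<mu> \<le> - d / 2 * S"
proof (cases "\<mu> \<le> S")
  case True
  then have "d / 2 * (d * \<mu>) \<le> d / 2 * (S - \<mu>)"
    using assms by (intro mult_left_mono) auto
  then show ?thesis
    by (simp add: right_diff_distrib)
next
  case False
  then have "d / 2 * (d * \<mu>) \<le> d / 2 * (\<mu> - S)"
    using assms by (intro mult_left_mono) auto
  then show ?thesis
    by (simp add: right_diff_distrib)
qed

theorem (in prob_space) chernoff_indicator_sum:
  fixes X :: "'i \<Rightarrow> 'a \<Rightarrow> real" and p d :: real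
  assumes I: "finite I" and indep: "indep_vars (\<lambda>_. borel) X I"
    and B: "B \<in> sets borel"
    and p: "\<And>i. i \<in> I \<Longrightarrow> prob {\<omega>\<in>space M. X i \<omega> \<in> B} = p"
    and d: "0 < d" "d \<le> 2"
  shows "prob {\<omega>\<in>space M. d * (card I * p) \<le> \<bar>(\<Sum>i\<in>I. indicator B (X i \<omega>)) - card I * p\<bar>}
           \<le> 2 * exp (- (d\<^sup>2 * (card I * p) / 4))"
proof -
  define \<mu> where "\<mu> = card I * p"
  define S where "S \<omega> = (\<Sum>i\<in>I. indicator B (X i \<omega>) :: real)" for \<omega>
  define A where "A c = {\<omega>\<in>space M. c * \<mu> + d / 2 * d * \<mu> \<le> c * S \<omega>}" for c
  have "0 \<le> \<mu>"
  proof (cases "I = {}")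
    case False
    then obtain i where "i \<in> I" by auto
    then show ?thesis using p[of i, symmetric] by (simp add: \<mu>_def)
  qed (simp add: \<mu>_def)
  have A_sets: "A c \<in> sets M" for c
    unfolding A_def S_def using indep_vars_borel_measurable[OF indep] B by measurable
  have prob_A: "prob (A c) \<le> exp (- (d\<^sup>2 * \<mu> / 4))" if "\<bar>c\<bar> = d / 2" for c
  proof -
    have "prob (A c) \<le> exp (\<mu> * (exp c - 1) - (c * \<mu> + d / 2 * d * \<mu>))"
      using prob_indicator_sum_exp_tail[OF I indep B p, of "c * \<mu> + d / 2 * d * \<mu>" c]
      unfolding A_def S_def \<mu>_def .
    also have "\<dots> \<le> exp (- (d\<^sup>2 * \<mu> / 4))"
      using chernoff_exponent_le[OF that d(2) \<open>0 \<le> \<mu>\<close>] by simp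
    finally show ?thesis .
  qed
  have "{\<omega>\<in>space M. d * \<mu> \<le> \<bar>S \<omega> - \<mu>\<bar>} \<subseteq> A (d / 2) \<union> A (- d / 2)"
    using two_sided_deviation_cases[OF d(1)] by (auto simp: A_def)
  then have "prob {\<omega>\<in>space M. d * \<mu> \<le> \<bar>S \<omega> - \<mu>\<bar>} \<le> prob (A (d / 2) \<union> A (- d / 2))"
    using A_sets by (intro finite_measure_mono) auto
  also have "\<dots> \<le> prob (A (d / 2)) + prob (A (- d / 2))"
    using A_sets by (intro measure_subadditive) auto
  also have "\<dots> \<le> 2 * exp (- (d\<^sup>2 * \<mu> / 4))"
    using prob_A[of "d / 2"] prob_A[of "- d / 2"] d by simp
  finally show ?thesis unfolding S_def \<mu>_def .
qed

theorem (in prob_space) AE_eventually_indicator_sums_concentrated: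
  fixes X :: "nat \<Rightarrow> 'a \<Rightarrow> real" and B :: "nat \<Rightarrow> 'k \<Rightarrow> real set"
    and K :: "nat \<Rightarrow> 'k set" and d :: "nat \<Rightarrow> real"
  defines "\<mu> n k \<equiv> real n * prob {\<omega>\<in>space M. X 0 \<omega> \<in> B n k}"
  assumes indep: "indep_vars (\<lambda>_. borel) X UNIV"
    and ident: "\<And>i. distr M borel (X i) = distr M borel (X 0)"
    and B: "\<And>n k. B n k \<in> sets borel" and K: "\<And>n. finite (K n)"
    and d: "\<And>n. 0 < d n \<and> d n \<le> 2"
    and summable: "summable (\<lambda>n. \<Sum>k\<in>K n. exp (- ((d n)\<^sup>2 * \<mu> n k / 4)))"
  shows "AE \<omega> in M. \<forall>\<^sub>F n in sequentially. \<forall>k\<in>K n.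
           \<bar>(\<Sum>i\<in>{1..n}. indicator (B n k) (X i \<omega>)) - \<mu> n k\<bar> < d n * \<mu> n k"
proof -
  define Dev where
    "Dev n k = {\<omega>\<in>space M. d n * \<mu> n k \<le> \<bar>(\<Sum>i\<in>{1..n}. indicator (B n k) (X i \<omega>)) - \<mu> n k\<bar>}"
    for n k
  have Dev_sets: "Dev n k \<in> sets M" for n k
    unfolding Dev_def using indep_vars_borel_measurable[OF indep] B by measurable
  have prob_Dev: "prob (Dev n k) \<le> 2 * exp (- ((d n)\<^sup>2 * \<mu> n k / 4))" for n k
  proof -
    have "indep_vars (\<lambda>_. borel) X {1..n}"
      using indep by (rule indep_vars_subset) simp
    moreover have "prob {\<omega>\<in>space M. X i \<omega> \<in> B n k} = prob {\<omega>\<in>space M. X 0 \<omega> \<in> B n k}" for i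
      using indep_vars_borel_measurable[OF indep] ident B by (intro prob_eq_of_distr_eq) auto
    ultimately show ?thesis
      using chernoff_indicator_sum[of "{1..n}" X "B n k" _ "d n"] B d
      unfolding Dev_def \<mu>_def by simp
  qed
  have "summable (\<lambda>n. measure M (\<Union>k\<in>K n. Dev n k))"
  proof (rule summable_comparison_test[OF _ summable_mult[OF summable, of 2]], intro exI allI impI)
    fix n
    have "measure M (\<Union>k\<in>K n. Dev n k) \<le> (\<Sum>k\<in>K n. prob (Dev n k))"
      using K Dev_sets by (intro finite_measure_subadditive_finite) auto
    also have "\<dots> \<le> 2 * (\<Sum>k\<in>K n. exp (- ((d n)\<^sup>2 * \<mu> n k / 4)))"
      unfolding sum_distrib_left by (intro sum_mono prob_Dev)
    finally show "norm (measure M (\<Union>k\<in>K n. Dev n k)) \<le> 2 * (\<Sum>k\<in>K n. exp (- ((d n)\<^sup>2 * \<mu> n k / 4)))"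
      by simp
  qed
  then have "AE \<omega> in M. \<forall>\<^sub>F n in sequentially. \<omega> \<in> space M - (\<Union>k\<in>K n. Dev n k)"
    using K Dev_sets by (intro borel_cantelli_AE1) (auto simp: emeasure_eq_measure)
  then show ?thesis
    by eventually_elim (auto elim!: eventually_mono simp: Dev_def not_le)
qed

section \<open>Deterministic estimates\<close>

lemma powr_diff_MVT:
  fixes a u w :: real
  assumes "0 < u" "u < w"
  obtains z where "u < z" "z < w" "w powr a - u powr a = (w - u) * (a * z powr (a - 1))"
proof -
  have "\<exists>z. u < z \<and> z < w \<and> w powr a - u powr a = (w - u) * (a * z powr (a - 1))"
  proof (rule MVT2[OF assms(2)])
    fix x assume "u \<le> x" "x \<le> w"
    then have "0 < x" using assms by auto
    then show "((\<lambda>z. z powr a) has_real_derivative a * x powr (a - 1)) (at x)"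
      by (rule has_real_derivative_powr)
  qed
  then show ?thesis using that by blast
qed

lemma powr_neg_difference_quotient_error:
  fixes \<alpha> \<epsilon> u h :: real
  assumes "0 < \<alpha>" "0 < \<epsilon>" "\<epsilon> \<le> u" "0 < h"
  shows "\<bar>(u powr (- \<alpha>) - (u + h) powr (- \<alpha>)) / h - \<alpha> * u powr (- \<alpha> - 1)\<bar>
           \<le> \<alpha> * (\<alpha> + 1) * \<epsilon> powr (- \<alpha> - 2) * h"
proof -
  have "0 < u" using assms by auto
  obtain z where z: "u < z" "z < u + h"
    and "(u + h) powr (- \<alpha>) - u powr (- \<alpha>) = h * (- \<alpha> * z powr (- \<alpha> - 1))"
    using powr_diff_MVT[of u "u + h" "- \<alpha>"] \<open>0 < u\<close> assms by (auto simp: algebra_simps)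
  then have quotient: "(u powr (- \<alpha>) - (u + h) powr (- \<alpha>)) / h = \<alpha> * z powr (- \<alpha> - 1)"
    using assms by (simp add: field_simps)
  obtain y where y: "u < y" "y < u + h"
    and "(u + h) powr (- \<alpha> - 1) - u powr (- \<alpha> - 1) = h * ((- \<alpha> - 1) * y powr (- \<alpha> - 1 - 1))"
    using powr_diff_MVT[of u "u + h" "- \<alpha> - 1"] \<open>0 < u\<close> assms by (auto simp: algebra_simps)
  then have "u powr (- \<alpha> - 1) - (u + h) powr (- \<alpha> - 1) = h * ((\<alpha> + 1) * y powr (- \<alpha> - 2))"
    by (simp add: algebra_simps)
  also have "\<dots> \<le> h * ((\<alpha> + 1) * \<epsilon> powr (- \<alpha> - 2))"
    using y \<open>0 < u\<close> assms by (intro mult_left_mono powr_mono2') auto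
  finally have second_difference:
    "u powr (- \<alpha> - 1) - (u + h) powr (- \<alpha> - 1) \<le> h * ((\<alpha> + 1) * \<epsilon> powr (- \<alpha> - 2))" .
  have "z powr (- \<alpha> - 1) \<le> u powr (- \<alpha> - 1)" "(u + h) powr (- \<alpha> - 1) \<le> z powr (- \<alpha> - 1)"
    using z \<open>0 < u\<close> assms by (auto intro!: powr_mono2')
  then have "\<bar>\<alpha> * z powr (- \<alpha> - 1) - \<alpha> * u powr (- \<alpha> - 1)\<bar>
      \<le> \<alpha> * (u powr (- \<alpha> - 1) - (u + h) powr (- \<alpha> - 1))"
    using assms by (simp add: abs_le_iff algebra_simps)
  also have "\<dots> \<le> \<alpha> * (h * ((\<alpha> + 1) * \<epsilon> powr (- \<alpha> - 2)))"
    using second_difference assms by (intro mult_left_mono) auto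
  finally show ?thesis unfolding quotient by (simp add: mult_ac)
qed

lemma tail_difference_quotient_error:
  fixes F :: "real \<Rightarrow> real"
  assumes "0 < \<alpha>" "0 < \<epsilon>" "\<epsilon> \<le> u" "0 < h" "0 < N"
    and E: "\<And>v. \<epsilon> * N \<le> v \<Longrightarrow> \<bar>v powr \<alpha> * F v - 1\<bar> \<le> E"
  shows "\<bar>N powr \<alpha> * (F (u * N) - F ((u + h) * N)) / h - \<alpha> * u powr (- \<alpha> - 1)\<bar>
           \<le> 2 * \<epsilon> powr (- \<alpha>) * E / h + \<alpha> * (\<alpha> + 1) * \<epsilon> powr (- \<alpha> - 2) * h"
proof -
  define r where "r w = (w * N) powr \<alpha> * F (w * N)" for w
  have scaled: "N powr \<alpha> * F (w * N) = w powr (- \<alpha>) * r w" if "0 < w" for w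
    using that \<open>0 < N\<close> by (simp add: r_def powr_mult powr_minus field_simps)
  have r_close: "\<bar>r w - 1\<bar> \<le> E" and weight: "w powr (- \<alpha>) \<le> \<epsilon> powr (- \<alpha>)" if "\<epsilon> \<le> w" for w
    using that assms unfolding r_def by (auto intro!: E mult_right_mono powr_mono2')
  let ?w = "u + h"
  have "\<bar>u powr (- \<alpha>) * (r u - 1) - ?w powr (- \<alpha>) * (r ?w - 1)\<bar>
      \<le> u powr (- \<alpha>) * \<bar>r u - 1\<bar> + ?w powr (- \<alpha>) * \<bar>r ?w - 1\<bar>"
    by (rule order_trans[OF abs_triangle_ineq4]) (simp add: abs_mult)
  also have "\<dots> \<le> \<epsilon> powr (- \<alpha>) * E + \<epsilon> powr (- \<alpha>) * E"
    using assms by (intro add_mono mult_mono r_close weight) auto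
  also have "\<dots> = 2 * \<epsilon> powr (- \<alpha>) * E"
    by simp
  finally have fluctuation:
    "\<bar>(u powr (- \<alpha>) * (r u - 1) - ?w powr (- \<alpha>) * (r ?w - 1)) / h\<bar> \<le> 2 * \<epsilon> powr (- \<alpha>) * E / h"
    using assms(4) by (subst abs_divide) (auto intro: divide_right_mono)
  have decomposition: "N powr \<alpha> * (F (u * N) - F (?w * N)) / h - \<alpha> * u powr (- \<alpha> - 1)
      = (u powr (- \<alpha>) * (r u - 1) - ?w powr (- \<alpha>) * (r ?w - 1)) / h
        + ((u powr (- \<alpha>) - ?w powr (- \<alpha>)) / h - \<alpha> * u powr (- \<alpha> - 1))"
    using assms scaled[of u] scaled[of ?w] by (simp add: right_diff_distrib diff_divide_distrib)
  show ?thesis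
    unfolding decomposition
    by (rule order_trans[OF abs_triangle_ineq add_mono[OF fluctuation
          powr_neg_difference_quotient_error[OF assms(1-4)]]])
qed

text \<open>Capping at 1 keeps the supremum finite at every level; the cap is inactive once the level
  is large enough for \<open>r\<close> to be within 1 of its limit.\<close>

definition sup_tail_deviation :: "(real \<Rightarrow> real) \<Rightarrow> real \<Rightarrow> real" where
  "sup_tail_deviation r a = (SUP v\<in>{a..}. min 1 \<bar>r v - 1\<bar>)"

lemma bdd_above_min_one:
  fixes r :: "real \<Rightarrow> real"
  shows "bdd_above ((\<lambda>v. min 1 \<bar>r v - 1\<bar>) ` A)"
  by (rule bdd_aboveI2[of _ _ 1]) (simp add: min_le_iff_disj)

lemma min_one_le_sup_tail_deviation:
  "a \<le> v \<Longrightarrow> min 1 \<bar>r v - 1\<bar> \<le> sup_tail_deviation r a"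
  unfolding sup_tail_deviation_def by (rule cSUP_upper[OF _ bdd_above_min_one]) simp

lemma sup_tail_deviation_nonneg: "0 \<le> sup_tail_deviation r a"
  using min_one_le_sup_tail_deviation[of a a r] by linarith

lemma tendsto_sup_tail_deviation:
  assumes "(r \<longlongrightarrow> 1) at_top" and "filterlim g at_top F"
  shows "((\<lambda>x. sup_tail_deviation r (g x)) \<longlongrightarrow> 0) F"
proof (rule tendstoI)
  fix \<eta> :: real assume "0 < \<eta>"
  then have "\<forall>\<^sub>F v in at_top. dist (r v) 1 < \<eta> / 2"
    using assms(1) by (intro tendstoD) auto
  then obtain V where V: "\<And>v. V \<le> v \<Longrightarrow> \<bar>r v - 1\<bar> < \<eta> / 2"
    by (auto simp: eventually_at_top_linorder dist_real_def)
  have "\<forall>\<^sub>F x in F. V \<le> g x"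
    using assms(2) by (simp add: filterlim_at_top)
  then show "\<forall>\<^sub>F x in F. dist (sup_tail_deviation r (g x)) 0 < \<eta>"
  proof eventually_elim
    case (elim x)
    have "min 1 \<bar>r v - 1\<bar> \<le> \<eta> / 2" if "g x \<le> v" for v
      using V[of v] elim that min.cobounded2[of 1 "\<bar>r v - 1\<bar>"] by linarith
    then have "sup_tail_deviation r (g x) \<le> \<eta> / 2"
      unfolding sup_tail_deviation_def by (intro cSUP_least) auto
    then show ?case using \<open>0 < \<eta>\<close> sup_tail_deviation_nonneg[of r "g x"] by simp
  qed
qed

lemma eventually_deviation_le_sup_tail_deviation:
  assumes "(r \<longlongrightarrow> 1) at_top" and "filterlim g at_top F"
  shows "\<forall>\<^sub>F x in F. \<forall>v. g x \<le> v \<longrightarrow> \<bar>r v - 1\<bar> \<le> sup_tail_deviation r (g x)"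
proof -
  have "\<forall>\<^sub>F x in F. sup_tail_deviation r (g x) < 1"
    using order_tendstoD(2)[OF tendsto_sup_tail_deviation[OF assms]] by simp
  then show ?thesis
  proof eventually_elim
    case (elim x)
    show ?case
    proof (intro allI impI)
      fix v assume "g x \<le> v"
      then have "min 1 \<bar>r v - 1\<bar> \<le> sup_tail_deviation r (g x)"
        by (rule min_one_le_sup_tail_deviation)
      with elim show "\<bar>r v - 1\<bar> \<le> sup_tail_deviation r (g x)"
        by (simp add: min_def split: if_splits)
    qed
  qed
qed

lemma int_multiples_in_interval:
  fixes h a b :: real
  assumes "0 < h"
  shows "finite {k::int. a \<le> h * k \<and> h * k < b}"
    and "a \<le> b \<Longrightarrow> real (card {k::int. a \<le> h * k \<and> h * k < b}) \<le> (b - a) / h + 1"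
proof -
  have subset: "{k::int. a \<le> h * k \<and> h * k < b} \<subseteq> {\<lceil>a / h\<rceil>..\<lfloor>b / h\<rfloor>}"
  proof
    fix k assume "k \<in> {k::int. a \<le> h * k \<and> h * k < b}"
    then have "a / h \<le> k" "k \<le> b / h"
      using assms by (auto simp: pos_divide_le_eq pos_le_divide_eq mult.commute)
    then show "k \<in> {\<lceil>a / h\<rceil>..\<lfloor>b / h\<rfloor>}"
      by (simp add: ceiling_le_iff le_floor_iff)
  qed
  then show "finite {k::int. a \<le> h * k \<and> h * k < b}"
    by (rule finite_subset) simp
  assume "a \<le> b"
  have "card {k::int. a \<le> h * k \<and> h * k < b} \<le> nat (\<lfloor>b / h\<rfloor> + 1 - \<lceil>a / h\<rceil>)"
    using card_mono[OF _ subset] by simp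
  then have "real (card {k::int. a \<le> h * k \<and> h * k < b}) \<le> real (nat (\<lfloor>b / h\<rfloor> + 1 - \<lceil>a / h\<rceil>))"
    by linarith
  also have "\<dots> \<le> b / h + 1 - a / h"
  proof (cases "0 \<le> \<lfloor>b / h\<rfloor> + 1 - \<lceil>a / h\<rceil>")
    case True
    then have "real (nat (\<lfloor>b / h\<rfloor> + 1 - \<lceil>a / h\<rceil>)) = \<lfloor>b / h\<rfloor> + 1 - \<lceil>a / h\<rceil>"
      by simp
    with of_int_floor_le[of "b / h"] le_of_int_ceiling[of "a / h"] show ?thesis
      by linarith
  next
    case False
    have "a / h \<le> b / h"
      using \<open>a \<le> b\<close> assms by (simp add: divide_right_mono)
    with False show ?thesis by simp
  qed
  finally show "real (card {k::int. a \<le> h * k \<and> h * k < b}) \<le> (b - a) / h + 1"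
    by (simp add: diff_divide_distrib)
qed

lemma int_multiple_in_interval:
  fixes h a b :: real
  assumes "0 < h" "h < b - a"
  shows "\<exists>k::int. a \<le> h * k \<and> h * k < b"
proof (intro exI conjI)
  have "a \<le> \<lceil>a / h\<rceil> * h"
    using le_of_int_ceiling[of "a / h"] unfolding pos_divide_le_eq[OF assms(1)] .
  then show "a \<le> h * \<lceil>a / h\<rceil>"
    by (simp only: mult.commute)
  have "h * \<lceil>a / h\<rceil> \<le> h * (a / h + 1)"
    using assms(1) of_int_ceiling_le_add_one[of "a / h"] by (intro mult_left_mono) auto
  also have "\<dots> = a + h"
    using assms(1) by (simp add: distrib_left)
  also have "\<dots> < b"
    using assms(2) by simp
  finally show "h * \<lceil>a / h\<rceil> < b" .
qed

lemma eventually_int_multiples_in_interval_nonempty: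
  fixes h :: "nat \<Rightarrow> real" and a b :: real
  assumes "h \<longlonglongrightarrow> 0" "\<And>n. 0 < h n" "a < b"
  shows "\<forall>\<^sub>F n in sequentially. {a..<b} \<inter> range (\<lambda>k::int. h n * of_int k) \<noteq> {}"
proof -
  have "\<forall>\<^sub>F n in sequentially. h n < b - a"
    using order_tendstoD(2)[OF assms(1), of "b - a"] assms(3) by simp
  then show ?thesis
  proof eventually_elim
    case (elim n)
    then obtain k :: int where "a \<le> h n * k" "h n * k < b"
      using int_multiple_in_interval[OF assms(2)] by blast
    then have "h n * of_int k \<in> {a..<b} \<inter> range (\<lambda>k::int. h n * of_int k)"
      by auto
    then show ?case
      by blast
  qed
qed

text \<open>Nonemptiness matters: the supremum of the empty set of reals is unspecified.\<close>

lemma tendsto_SUP_zero: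
  fixes V :: "'i \<Rightarrow> 'u \<Rightarrow> real"
  assumes "\<forall>\<^sub>F n in F. U n \<noteq> {}" and "\<forall>\<^sub>F n in F. \<forall>u\<in>U n. 0 \<le> V n u"
    and "\<And>\<eta>. 0 < \<eta> \<Longrightarrow> \<forall>\<^sub>F n in F. \<forall>u\<in>U n. V n u \<le> \<eta>"
  shows "((\<lambda>n. SUP u\<in>U n. V n u) \<longlongrightarrow> 0) F"
proof (rule tendstoI)
  fix \<eta> :: real assume "0 < \<eta>"
  then have "\<forall>\<^sub>F n in F. \<forall>u\<in>U n. V n u \<le> \<eta> / 2"
    using assms(3)[of "\<eta> / 2"] by simp
  with assms(1,2) show "\<forall>\<^sub>F n in F. dist (SUP u\<in>U n. V n u) 0 < \<eta>"
  proof eventually_elim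
    case (elim n)
    then obtain u where u: "u \<in> U n" by auto
    have "bdd_above (V n ` U n)"
      using elim by (intro bdd_aboveI2[of _ _ "\<eta> / 2"]) auto
    then have "0 \<le> (SUP u\<in>U n. V n u)"
      using elim u by (intro order_trans[OF _ cSUP_upper[OF u]]) auto
    moreover have "(SUP u\<in>U n. V n u) \<le> \<eta> / 2"
      using elim by (intro cSUP_least) auto
    ultimately show ?case
      using \<open>0 < \<eta>\<close> by simp
  qed
qed

lemma abs_ratio_deviation_le:
  fixes S \<mu> D f A d e :: real
  assumes "\<bar>S - \<mu>\<bar> < d * \<mu>" "\<bar>\<mu> / D - f\<bar> < e" "0 < D" "0 \<le> d" "f \<le> A"
  shows "\<bar>S / D - f\<bar> \<le> d * (A + e) + e"
proof -
  have "S / D - f = (S - \<mu>) / D + (\<mu> / D - f)"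
    by (simp add: diff_divide_distrib)
  then have "\<bar>S / D - f\<bar> \<le> \<bar>S - \<mu>\<bar> / D + \<bar>\<mu> / D - f\<bar>"
    using \<open>0 < D\<close> abs_triangle_ineq[of "(S - \<mu>) / D" "\<mu> / D - f"] by (simp add: abs_divide)
  moreover have "\<bar>S - \<mu>\<bar> / D \<le> d * (\<mu> / D)"
    using assms(1,3) by (simp add: divide_right_mono less_imp_le)
  moreover have "d * (\<mu> / D) \<le> d * (A + e)"
    using assms(2,4,5) by (intro mult_left_mono) auto
  ultimately show ?thesis
    using assms(2) by linarith
qed

lemma mesh_sequence_exists:
  fixes e :: "nat \<Rightarrow> real"
  assumes "\<And>n. 0 \<le> e n" "e \<longlonglongrightarrow> 0" "0 < \<gamma>"
  shows "\<exists>h. (\<forall>n. (real n + 1) powr (- \<gamma>) \<le> h n) \<and> h \<longlonglongrightarrow> 0 \<and> (\<lambda>n. e n / h n) \<longlonglongrightarrow> 0"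
proof (intro exI conjI allI)
  define h where "h n = max (sqrt (e n)) ((real n + 1) powr (- \<gamma>))" for n
  show lower: "(real n + 1) powr (- \<gamma>) \<le> h n" for n
    by (simp add: h_def)
  have "(\<lambda>n. (real n + 1) powr (- \<gamma>)) \<longlonglongrightarrow> 0"
    using assms(3) by real_asymp
  then have "(\<lambda>n. max (sqrt (e n)) ((real n + 1) powr (- \<gamma>))) \<longlonglongrightarrow> max (sqrt 0) 0"
    using assms(2) by (intro tendsto_max tendsto_real_sqrt)
  then show "h \<longlonglongrightarrow> 0"
    by (simp add: h_def[abs_def])
  have ratio_bounds: "0 \<le> e n / h n \<and> e n / h n \<le> sqrt (e n)" for n
  proof -
    have "0 < h n"
      using lower[of n] by (rule less_le_trans[rotated]) simp
    moreover have "sqrt (e n) * sqrt (e n) \<le> sqrt (e n) * h n"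
      using assms(1)[of n] by (intro mult_left_mono) (auto simp: h_def)
    ultimately show ?thesis
      using assms(1)[of n] by (simp add: divide_le_eq)
  qed
  show "(\<lambda>n. e n / h n) \<longlonglongrightarrow> 0"
  proof (rule tendsto_sandwich[OF _ _ tendsto_const])
    show "\<forall>\<^sub>F n in sequentially. 0 \<le> e n / h n" "\<forall>\<^sub>F n in sequentially. e n / h n \<le> sqrt (e n)"
      by (simp_all add: ratio_bounds)
    show "(\<lambda>n. sqrt (e n)) \<longlonglongrightarrow> 0"
      using tendsto_real_sqrt[OF assms(2)] by simp
  qed
qed

lemma mesh_exponent_bound:
  fixes x c \<gamma> \<beta> h \<mu> :: real
  assumes "0 \<le> c" "(x + 1) powr (- \<gamma>) \<le> h" "c * h * x powr \<beta> \<le> \<mu>"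
  shows "c * (x + 1) powr (- 3 * \<gamma>) * x powr \<beta> \<le> ((x + 1) powr (- \<gamma>))\<^sup>2 * \<mu>"
proof -
  have "((x + 1) powr (- \<gamma>))\<^sup>2 * (x + 1) powr (- \<gamma>) = (x + 1) powr (- 3 * \<gamma>)"
    by (simp add: power2_eq_square powr_add[symmetric])
  then have "c * (x + 1) powr (- 3 * \<gamma>) * x powr \<beta>
      = ((x + 1) powr (- \<gamma>))\<^sup>2 * (c * (x + 1) powr (- \<gamma>) * x powr \<beta>)"
    by (simp add: mult_ac)
  also have "\<dots> \<le> ((x + 1) powr (- \<gamma>))\<^sup>2 * (c * h * x powr \<beta>)"
    using assms(1,2) by (intro mult_left_mono mult_right_mono) auto
  also have "\<dots> \<le> ((x + 1) powr (- \<gamma>))\<^sup>2 * \<mu>"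
    using assms(3) by (intro mult_left_mono) auto
  finally show ?thesis .
qed

lemma eventually_stretched_exp_le_inverse_square:
  fixes L c \<gamma> \<delta> :: real
  assumes "0 < c" "0 < \<gamma>" "0 < \<delta>"
  shows "\<forall>\<^sub>F n in sequentially. (L * (real n + 1) powr \<gamma> + 1)
    * exp (- (c * (real n + 1) powr (- 3 * \<gamma>) * real n powr (3 * \<gamma> + \<delta>) / 4)) \<le> inverse (real n ^ 2)"
proof -
  have "((\<lambda>n. real n ^ 2 * ((L * (real n + 1) powr \<gamma> + 1)
      * exp (- (c * (real n + 1) powr (- 3 * \<gamma>) * real n powr (3 * \<gamma> + \<delta>) / 4)))) \<longlongrightarrow> 0) at_top"
    using assms by real_asymp
  then have "\<forall>\<^sub>F n in sequentially. real n ^ 2 * ((L * (real n + 1) powr \<gamma> + 1)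
      * exp (- (c * (real n + 1) powr (- 3 * \<gamma>) * real n powr (3 * \<gamma> + \<delta>) / 4))) < 1"
    by (rule order_tendstoD(2)) simp
  then show ?thesis
    using eventually_ge_at_top[of 1] by eventually_elim (simp add: field_simps)
qed

text \<open>With means of order at least \<open>n\<^sup>\<beta> h\<^sub>n \<ge> n\<^sup>\<beta> (n+1)\<^sup>-\<^sup>\<gamma>\<close> and relative accuracy
  \<open>(n+1)\<^sup>-\<^sup>\<gamma>\<close>, the Chernoff exponents grow like \<open>n\<^sup>\<beta>\<^sup>-\<^sup>3\<^sup>\<gamma>\<close>, which beats the
  \<open>O((n+1)\<^sup>\<gamma>)\<close> terms of the union bound.\<close>

lemma summable_chernoff_union_bound:
  fixes \<mu> :: "nat \<Rightarrow> 'k \<Rightarrow> real" and h :: "nat \<Rightarrow> real" and K :: "nat \<Rightarrow> 'k set"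
  assumes "0 < c" "0 < \<gamma>" "3 * \<gamma> < \<beta>" "0 \<le> L"
    and mesh_lower: "\<And>n. (real n + 1) powr (- \<gamma>) \<le> h n"
    and card: "\<forall>\<^sub>F n in sequentially. real (card (K n)) \<le> L / h n + 1"
    and mean: "\<forall>\<^sub>F n in sequentially. \<forall>k\<in>K n. c * h n * real n powr \<beta> \<le> \<mu> n k"
  shows "summable (\<lambda>n. \<Sum>k\<in>K n. exp (- (((real n + 1) powr (- \<gamma>))\<^sup>2 * \<mu> n k / 4)))"
proof -
  define E where "E n = exp (- (c * (real n + 1) powr (- 3 * \<gamma>) * real n powr \<beta> / 4))" for n :: nat
  have "\<forall>\<^sub>F n in sequentially. (\<Sum>k\<in>K n. exp (- (((real n + 1) powr (- \<gamma>))\<^sup>2 * \<mu> n k / 4)))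
      \<le> (L * (real n + 1) powr \<gamma> + 1) * E n"
    using card mean
  proof eventually_elim
    case (elim n)
    have "(\<Sum>k\<in>K n. exp (- (((real n + 1) powr (- \<gamma>))\<^sup>2 * \<mu> n k / 4))) \<le> (\<Sum>k\<in>K n. E n)"
    proof (rule sum_mono)
      fix k assume "k \<in> K n"
      then have "c * (real n + 1) powr (- 3 * \<gamma>) * real n powr \<beta> \<le> ((real n + 1) powr (- \<gamma>))\<^sup>2 * \<mu> n k"
        using elim(2) \<open>0 < c\<close> by (intro mesh_exponent_bound[OF _ mesh_lower]) auto
      then show "exp (- (((real n + 1) powr (- \<gamma>))\<^sup>2 * \<mu> n k / 4)) \<le> E n"
        by (simp add: E_def)
    qed
    also have "\<dots> \<le> (L / h n + 1) * E n"
      using elim(1) by (simp add: E_def)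
    also have "\<dots> \<le> (L * (real n + 1) powr \<gamma> + 1) * E n"
    proof -
      have "0 < h n"
        using mesh_lower[of n] by (rule less_le_trans[rotated]) simp
      then have "1 / h n \<le> (real n + 1) powr \<gamma>"
        using mesh_lower[of n] by (simp add: powr_minus divide_simps mult.commute)
      then have "L / h n \<le> L * (real n + 1) powr \<gamma>"
        using \<open>0 \<le> L\<close> mult_left_mono[of "1 / h n" _ L] by simp
      then show ?thesis
        by (intro mult_right_mono) (auto simp: E_def)
    qed
    finally show ?case .
  qed
  moreover have "\<forall>\<^sub>F n in sequentially. (L * (real n + 1) powr \<gamma> + 1) * E n \<le> inverse (real n ^ 2)"
    using eventually_stretched_exp_le_inverse_square[OF \<open>0 < c\<close> \<open>0 < \<gamma>\<close>, of "\<beta> - 3 * \<gamma>" L] assms(3)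
    by (simp add: E_def)
  ultimately have "\<forall>\<^sub>F n in sequentially.
      norm (\<Sum>k\<in>K n. exp (- (((real n + 1) powr (- \<gamma>))\<^sup>2 * \<mu> n k / 4))) \<le> inverse (real n ^ 2)"
  proof eventually_elim
    case (elim n)
    have "0 \<le> (\<Sum>k\<in>K n. exp (- (((real n + 1) powr (- \<gamma>))\<^sup>2 * \<mu> n k / 4)))"
      by (intro sum_nonneg) simp
    with elim show ?case
      by (simp add: abs_of_nonneg)
  qed
  then show ?thesis
    by (rule summable_comparison_test_ev[OF _ inverse_power_summable]) simp
qed

section \<open>Window counts of an i.i.d. sample with a power tail\<close>

locale iid_power_tail = prob_space M for M :: "'a measure" +
  fixes \<tau> :: "nat \<Rightarrow> 'a \<Rightarrow> real" and \<alpha> \<kappa> :: real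
  assumes indep: "indep_vars (\<lambda>_. borel) \<tau> UNIV"
    and ident: "\<And>x. distr M borel (\<tau> x) = distr M borel (\<tau> 0)"
    and alpha_pos: "0 < \<alpha>" and kappa_pos: "0 < \<kappa>" and alpha_kappa_less_1: "\<alpha> * \<kappa> < 1"
    and power_tail: "((\<lambda>u. u powr \<alpha> * prob {\<omega>\<in>space M. u \<le> \<tau> 0 \<omega>}) \<longlongrightarrow> 1) at_top"
begin

lemma borel_measurable_tau [measurable]: "\<tau> x \<in> borel_measurable M"
  using indep_vars_borel_measurable[OF indep] by simp

definition window :: "nat \<Rightarrow> real \<Rightarrow> real \<Rightarrow> real set" where
  "window n u h = {t. u \<le> t / real n powr \<kappa> \<and> t / real n powr \<kappa> < u + h}"

lemma window_borel [measurable]: "window n u h \<in> sets borel"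
  unfolding window_def by measurable

definition expected_window_count :: "nat \<Rightarrow> real \<Rightarrow> real \<Rightarrow> real" where
  "expected_window_count n u h = real n * prob {\<omega>\<in>space M. \<tau> 0 \<omega> \<in> window n u h}"

definition tail_deviation :: "real \<Rightarrow> nat \<Rightarrow> real" where
  "tail_deviation \<epsilon> n =
     sup_tail_deviation (\<lambda>v. v powr \<alpha> * prob {\<omega>\<in>space M. v \<le> \<tau> 0 \<omega>}) (\<epsilon> * real n powr \<kappa>)"

abbreviation mean_density :: "nat \<Rightarrow> real \<Rightarrow> real \<Rightarrow> real" where
  "mean_density n u h \<equiv> expected_window_count n u h / (h * real n powr (1 - \<alpha> * \<kappa>))"

abbreviation empirical_density :: "'a \<Rightarrow> nat \<Rightarrow> real \<Rightarrow> real \<Rightarrow> real" where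
  "empirical_density \<omega> n u h
     \<equiv> real (card (T_set \<kappa> (\<lambda>x. \<tau> x \<omega>) u (ereal (u + h)) n)) / (h * real n powr (1 - \<alpha> * \<kappa>))"

lemma card_T_set_eq_sum_indicator:
  "real (card (T_set \<kappa> (\<lambda>x. \<tau> x \<omega>) u (ereal (u + h)) n))
     = (\<Sum>i\<in>{1..n}. indicator (window n u h) (\<tau> i \<omega>))"
proof -
  have "T_set \<kappa> (\<lambda>x. \<tau> x \<omega>) u (ereal (u + h)) n = {i\<in>{1..n}. \<tau> i \<omega> \<in> window n u h}"
    by (auto simp: T_set_def window_def)
  then have "real (card (T_set \<kappa> (\<lambda>x. \<tau> x \<omega>) u (ereal (u + h)) n))
      = (\<Sum>i\<in>{i\<in>{1..n}. \<tau> i \<omega> \<in> window n u h}. 1)"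
    by simp
  also have "\<dots> = (\<Sum>i\<in>{1..n}. if \<tau> i \<omega> \<in> window n u h then 1 else 0)"
    by (rule sum.inter_filter) simp
  also have "\<dots> = (\<Sum>i\<in>{1..n}. indicator (window n u h) (\<tau> i \<omega>))"
    by (rule sum.cong) (simp_all add: indicator_def)
  finally show ?thesis .
qed

lemma tail_deviation_nonneg: "0 \<le> tail_deviation \<epsilon> n"
  unfolding tail_deviation_def by (rule sup_tail_deviation_nonneg)

lemma filterlim_scaled_level: "0 < \<epsilon> \<Longrightarrow> filterlim (\<lambda>n. \<epsilon> * real n powr \<kappa>) at_top sequentially"
  using kappa_pos by real_asymp

lemma tendsto_tail_deviation: "0 < \<epsilon> \<Longrightarrow> tail_deviation \<epsilon> \<longlonglongrightarrow> 0"
  unfolding tail_deviation_def[abs_def]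
  by (intro tendsto_sup_tail_deviation[OF power_tail] filterlim_scaled_level)

lemma expected_window_count_eq_tail_difference:
  assumes "1 \<le> n" "0 < h"
  shows "expected_window_count n u h = real n *
    (prob {\<omega>\<in>space M. u * real n powr \<kappa> \<le> \<tau> 0 \<omega>}
      - prob {\<omega>\<in>space M. (u + h) * real n powr \<kappa> \<le> \<tau> 0 \<omega>})"
proof -
  define N where "N = real n powr \<kappa>"
  have "0 < N"
    using assms(1) by (simp add: N_def)
  then have "{\<omega>\<in>space M. \<tau> 0 \<omega> \<in> window n u h}
      = {\<omega>\<in>space M. u * N \<le> \<tau> 0 \<omega>} - {\<omega>\<in>space M. (u + h) * N \<le> \<tau> 0 \<omega>}"
    by (auto simp: window_def N_def pos_le_divide_eq pos_divide_less_eq)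
  moreover have "u * N \<le> (u + h) * N"
    using \<open>0 < N\<close> assms(2) by (intro mult_right_mono) auto
  then have "{\<omega>\<in>space M. (u + h) * N \<le> \<tau> 0 \<omega>} \<subseteq> {\<omega>\<in>space M. u * N \<le> \<tau> 0 \<omega>}"
    by (auto intro: order_trans)
  ultimately show ?thesis
    unfolding expected_window_count_def N_def by (subst finite_measure_Diff[symmetric]) auto
qed

lemma eventually_expected_window_density_error:
  assumes "0 < \<epsilon>" "\<And>n. 0 < h n"
  shows "\<forall>\<^sub>F n in sequentially. \<forall>u\<ge>\<epsilon>.
    \<bar>mean_density n u (h n) - \<alpha> * u powr (- \<alpha> - 1)\<bar>
      \<le> 2 * \<epsilon> powr (- \<alpha>) * tail_deviation \<epsilon> n / h n + \<alpha> * (\<alpha> + 1) * \<epsilon> powr (- \<alpha> - 2) * h n"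
  using eventually_deviation_le_sup_tail_deviation[OF power_tail filterlim_scaled_level[OF assms(1)]]
    eventually_ge_at_top[of 1]
proof eventually_elim
  case (elim n)
  define N where "N = real n powr \<kappa>"
  have "0 < N"
    using elim(2) by (simp add: N_def)
  have "real n / real n powr (1 - \<alpha> * \<kappa>) = N powr \<alpha>"
    using elim(2) by (simp add: N_def powr_powr powr_diff mult.commute)
  moreover have "mean_density n u (h n)
      = real n / real n powr (1 - \<alpha> * \<kappa>)
        * (prob {\<omega>\<in>space M. u * N \<le> \<tau> 0 \<omega>} - prob {\<omega>\<in>space M. (u + h n) * N \<le> \<tau> 0 \<omega>}) / h n"
    for u
    using elim(2) assms(2)[of n]
    by (simp add: expected_window_count_eq_tail_difference N_def)
  ultimately have density_eq: "mean_density n u (h n)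
      = N powr \<alpha> * (prob {\<omega>\<in>space M. u * N \<le> \<tau> 0 \<omega>} - prob {\<omega>\<in>space M. (u + h n) * N \<le> \<tau> 0 \<omega>}) / h n"
    for u
    by simp
  show ?case
  proof (intro allI impI)
    fix u assume "\<epsilon> \<le> u"
    have "\<bar>N powr \<alpha> * (prob {\<omega>\<in>space M. u * N \<le> \<tau> 0 \<omega>} - prob {\<omega>\<in>space M. (u + h n) * N \<le> \<tau> 0 \<omega>})
          / h n - \<alpha> * u powr (- \<alpha> - 1)\<bar>
        \<le> 2 * \<epsilon> powr (- \<alpha>) * tail_deviation \<epsilon> n / h n + \<alpha> * (\<alpha> + 1) * \<epsilon> powr (- \<alpha> - 2) * h n"
      by (rule tail_difference_quotient_error[where F = "\<lambda>v. prob {\<omega>\<in>space M. v \<le> \<tau> 0 \<omega>}",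
            OF alpha_pos assms(1) \<open>\<epsilon> \<le> u\<close> assms(2) \<open>0 < N\<close>])
         (use elim(1) in \<open>simp add: tail_deviation_def N_def\<close>)
    then show "\<bar>mean_density n u (h n) - \<alpha> * u powr (- \<alpha> - 1)\<bar>
        \<le> 2 * \<epsilon> powr (- \<alpha>) * tail_deviation \<epsilon> n / h n + \<alpha> * (\<alpha> + 1) * \<epsilon> powr (- \<alpha> - 2) * h n"
      unfolding density_eq .
  qed
qed

lemma uniform_limit_expected_window_density:
  assumes "0 < \<epsilon>" "\<And>n. 0 < h n" "h \<longlonglongrightarrow> 0" "(\<lambda>n. tail_deviation \<epsilon> n / h n) \<longlonglongrightarrow> 0"
  shows "uniform_limit {\<epsilon>..}
    (\<lambda>n u. mean_density n u (h n))
    (\<lambda>u. \<alpha> * u powr (- \<alpha> - 1)) sequentially"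
proof (rule uniform_limitI)
  fix e :: real assume "0 < e"
  define err where
    "err n = 2 * \<epsilon> powr (- \<alpha>) * (tail_deviation \<epsilon> n / h n) + \<alpha> * (\<alpha> + 1) * \<epsilon> powr (- \<alpha> - 2) * h n"
    for n
  have "err \<longlonglongrightarrow> 2 * \<epsilon> powr (- \<alpha>) * 0 + \<alpha> * (\<alpha> + 1) * \<epsilon> powr (- \<alpha> - 2) * 0"
    unfolding err_def[abs_def] using assms(3,4) by (intro tendsto_intros)
  then have "\<forall>\<^sub>F n in sequentially. err n < e"
    using \<open>0 < e\<close> by (intro order_tendstoD(2)) auto
  with eventually_expected_window_density_error[of \<epsilon> h, OF assms(1,2)]
  show "\<forall>\<^sub>F n in sequentially. \<forall>u\<in>{\<epsilon>..}.
    dist (mean_density n u (h n)) (\<alpha> * u powr (- \<alpha> - 1)) < e"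
  proof eventually_elim
    case (elim n)
    show ?case
    proof
      fix u :: real assume "u \<in> {\<epsilon>..}"
      then have "\<bar>mean_density n u (h n) - \<alpha> * u powr (- \<alpha> - 1)\<bar>
          \<le> err n"
        using elim(1) by (simp add: err_def)
      then show "dist (mean_density n u (h n))
          (\<alpha> * u powr (- \<alpha> - 1)) < e"
        using elim(2) by (simp add: dist_real_def)
    qed
  qed
qed

lemma eventually_expected_window_count_ge:
  assumes "0 < \<epsilon>" "\<epsilon> < Mx" "\<And>n. 0 < h n"
    and density: "uniform_limit {\<epsilon>..}
      (\<lambda>n u. mean_density n u (h n))
      (\<lambda>u. \<alpha> * u powr (- \<alpha> - 1)) sequentially"
  shows "\<forall>\<^sub>F n in sequentially. \<forall>u\<in>{\<epsilon>..<Mx}.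
    \<alpha> * Mx powr (- \<alpha> - 1) / 2 * h n * real n powr (1 - \<alpha> * \<kappa>) \<le> expected_window_count n u (h n)"
proof -
  define c where "c = \<alpha> * Mx powr (- \<alpha> - 1) / 2"
  have "0 < c"
    using alpha_pos assms(1,2) by (simp add: c_def)
  show ?thesis
    unfolding c_def[symmetric]
    using uniform_limitD[OF density \<open>0 < c\<close>] eventually_ge_at_top[of 1]
  proof eventually_elim
    case (elim n)
    show ?case
    proof
      fix u assume u: "u \<in> {\<epsilon>..<Mx}"
      have "2 * c \<le> \<alpha> * u powr (- \<alpha> - 1)"
        using u alpha_pos assms(1) by (auto simp: c_def intro!: powr_mono2')
      moreover have "\<bar>mean_density n u (h n)
          - \<alpha> * u powr (- \<alpha> - 1)\<bar> < c"
        using bspec[OF elim(1), of u] u by (simp add: dist_real_def)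
      ultimately have "c < mean_density n u (h n)"
        by linarith
      moreover have "0 < h n * real n powr (1 - \<alpha> * \<kappa>)"
        using assms(3)[of n] elim(2) by simp
      ultimately show "c * h n * real n powr (1 - \<alpha> * \<kappa>) \<le> expected_window_count n u (h n)"
        by (simp add: field_simps)
    qed
  qed
qed

lemma AE_eventually_window_counts_concentrated:
  assumes "0 < \<epsilon>" "\<epsilon> < Mx" "0 < \<gamma>" "3 * \<gamma> < 1 - \<alpha> * \<kappa>"
    and mesh_lower: "\<And>n. (real n + 1) powr (- \<gamma>) \<le> h n"
    and density: "uniform_limit {\<epsilon>..}
      (\<lambda>n u. mean_density n u (h n))
      (\<lambda>u. \<alpha> * u powr (- \<alpha> - 1)) sequentially"
  shows "AE \<omega> in M. \<forall>\<^sub>F n in sequentially. \<forall>k\<in>{k::int. \<epsilon> \<le> h n * k \<and> h n * k < Mx}.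
    \<bar>(\<Sum>i\<in>{1..n}. indicator (window n (h n * k) (h n)) (\<tau> i \<omega>)) - expected_window_count n (h n * k) (h n)\<bar>
      < (real n + 1) powr (- \<gamma>) * expected_window_count n (h n * k) (h n)"
proof -
  define K where "K n = {k::int. \<epsilon> \<le> h n * k \<and> h n * k < Mx}" for n
  have h_pos: "0 < h n" for n
    using mesh_lower[of n] by (rule less_le_trans[rotated]) simp
  have d: "0 < (real n + 1) powr (- \<gamma>) \<and> (real n + 1) powr (- \<gamma>) \<le> 2" for n
    using powr_mono2'[of "- \<gamma>" 1 "real n + 1"] assms(3) by simp
  have "summable (\<lambda>n. \<Sum>k\<in>K n.
      exp (- (((real n + 1) powr (- \<gamma>))\<^sup>2 * expected_window_count n (h n * of_int k) (h n) / 4)))"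
  proof (rule summable_chernoff_union_bound[OF _ assms(3,4) _ mesh_lower])
    show "0 < \<alpha> * Mx powr (- \<alpha> - 1) / 2" "0 \<le> Mx - \<epsilon>"
      using alpha_pos assms(1,2) by simp_all
    show "\<forall>\<^sub>F n in sequentially. real (card (K n)) \<le> (Mx - \<epsilon>) / h n + 1"
      using int_multiples_in_interval(2)[OF h_pos] assms(2) by (simp add: K_def)
    show "\<forall>\<^sub>F n in sequentially. \<forall>k\<in>K n. \<alpha> * Mx powr (- \<alpha> - 1) / 2 * h n * real n powr (1 - \<alpha> * \<kappa>)
        \<le> expected_window_count n (h n * of_int k) (h n)"
      using eventually_expected_window_count_ge[OF assms(1,2) h_pos density]
      by eventually_elim (auto simp: K_def)
  qed
  then show ?thesis
    using AE_eventually_indicator_sums_concentrated[where B = "\<lambda>n k. window n (h n * of_int k) (h n)"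
        and K = K and d = "\<lambda>n. (real n + 1) powr (- \<gamma>)", OF indep ident window_borel _ d]
      int_multiples_in_interval(1)[OF h_pos]
    unfolding K_def expected_window_count_def by simp
qed

lemma window_density_deviation_le:
  assumes "1 \<le> n" "0 < h" "0 < \<epsilon>" "\<epsilon> \<le> u" "0 \<le> d"
    and "\<bar>(\<Sum>i\<in>{1..n}. indicator (window n u h) (\<tau> i \<omega>)) - expected_window_count n u h\<bar>
      < d * expected_window_count n u h"
    and "\<bar>mean_density n u h - \<alpha> * u powr (- \<alpha> - 1)\<bar> < e"
  shows "\<bar>empirical_density \<omega> n u h
      - \<alpha> * u powr (- \<alpha> - 1)\<bar> \<le> d * (\<alpha> * \<epsilon> powr (- \<alpha> - 1) + e) + e"
  unfolding card_T_set_eq_sum_indicator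
proof (rule abs_ratio_deviation_le)
  show "0 < h * real n powr (1 - \<alpha> * \<kappa>)"
    using assms(1,2) by simp
  show "\<alpha> * u powr (- \<alpha> - 1) \<le> \<alpha> * \<epsilon> powr (- \<alpha> - 1)"
    using assms(3,4) alpha_pos by (auto intro!: mult_left_mono powr_mono2')
qed (use assms in auto)

lemma AE_tendsto_window_density:
  assumes "0 < \<epsilon>" "\<epsilon> < Mx" "0 < \<gamma>" "3 * \<gamma> < 1 - \<alpha> * \<kappa>"
    and mesh_lower: "\<And>n. (real n + 1) powr (- \<gamma>) \<le> h n" and "h \<longlonglongrightarrow> 0"
    and "(\<lambda>n. tail_deviation \<epsilon> n / h n) \<longlonglongrightarrow> 0"
  shows "AE \<omega> in M. (\<lambda>n. SUP u \<in> {\<epsilon>..<Mx} \<inter> range (\<lambda>k::int. h n * of_int k).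
    \<bar>empirical_density \<omega> n u (h n)
      - \<alpha> * u powr (- \<alpha> - 1)\<bar>) \<longlonglongrightarrow> 0"
proof -
  have h_pos: "0 < h n" for n
    using mesh_lower[of n] by (rule less_le_trans[rotated]) simp
  have density: "uniform_limit {\<epsilon>..}
      (\<lambda>n u. mean_density n u (h n))
      (\<lambda>u. \<alpha> * u powr (- \<alpha> - 1)) sequentially"
    by (rule uniform_limit_expected_window_density[OF assms(1) h_pos assms(6,7)])
  have "(\<lambda>n. (real n + 1) powr (- \<gamma>)) \<longlonglongrightarrow> 0"
    using assms(3) by real_asymp
  from AE_eventually_window_counts_concentrated[OF assms(1-5) density]
  show ?thesis
  proof eventually_elim
    case (elim \<omega>)
    show ?case
    proof (rule tendsto_SUP_zero[OF eventually_int_multiples_in_interval_nonempty[OF assms(6) h_pos assms(2)]])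
      fix \<eta> :: real assume "0 < \<eta>"
      define e where "e = min 1 (\<eta> / 2)"
      have "0 < e"
        using \<open>0 < \<eta>\<close> by (simp add: e_def)
      have "(\<lambda>n. (real n + 1) powr (- \<gamma>) * (\<alpha> * \<epsilon> powr (- \<alpha> - 1) + e)) \<longlonglongrightarrow> 0"
        using tendsto_mult_left_zero[OF \<open>(\<lambda>n. (real n + 1) powr (- \<gamma>)) \<longlonglongrightarrow> 0\<close>] by simp
      then have "\<forall>\<^sub>F n in sequentially. (real n + 1) powr (- \<gamma>) * (\<alpha> * \<epsilon> powr (- \<alpha> - 1) + e) < \<eta> / 2"
        using \<open>0 < \<eta>\<close> by (intro order_tendstoD(2)) auto
      with elim uniform_limitD[OF density \<open>0 < e\<close>] eventually_ge_at_top[of 1]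
      show "\<forall>\<^sub>F n in sequentially. \<forall>u\<in>{\<epsilon>..<Mx} \<inter> range (\<lambda>k::int. h n * of_int k).
        \<bar>empirical_density \<omega> n u (h n)
          - \<alpha> * u powr (- \<alpha> - 1)\<bar> \<le> \<eta>"
      proof eventually_elim
        case (elim n)
        show ?case
        proof
          fix u assume "u \<in> {\<epsilon>..<Mx} \<inter> range (\<lambda>k::int. h n * of_int k)"
          then obtain k :: int where u: "u = h n * k" "\<epsilon> \<le> u" "u < Mx"
            by auto
          have "\<bar>empirical_density \<omega> n u (h n)
              - \<alpha> * u powr (- \<alpha> - 1)\<bar> \<le> (real n + 1) powr (- \<gamma>) * (\<alpha> * \<epsilon> powr (- \<alpha> - 1) + e) + e"
            using bspec[OF elim(1), of k] bspec[OF elim(2), of u] u elim(3) h_pos[of n] assms(1)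
            by (intro window_density_deviation_le) (auto simp: dist_real_def)
          also have "\<dots> \<le> \<eta>"
            using elim(4) by (simp add: e_def)
          finally show "\<bar>empirical_density \<omega> n u (h n)
              - \<alpha> * u powr (- \<alpha> - 1)\<bar> \<le> \<eta>" .
        qed
      qed
    qed simp
  qed
qed

end

theorem lemmal:
  fixes M :: "'a measure" and \<tau> :: "nat \<Rightarrow> 'a \<Rightarrow> real"
    and \<alpha> \<kappa> \<epsilon> Mx :: real
  assumes "prob_space M"
    and "\<alpha> \<in> {0<..<1}" and "0 < \<kappa>" and "\<kappa> < 1 / \<alpha>"
    and "0 < \<epsilon>" and "\<epsilon> < Mx"
    and rv: "\<And>x. \<tau> x \<in> borel_measurable M"
    and indep: "prob_space.indep_vars M (\<lambda>_. borel) \<tau> UNIV"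
    and ident: "\<And>x. distr M borel (\<tau> x) = distr M borel (\<tau> 0)"
    and pos: "\<And>x. AE \<omega> in M. \<tau> x \<omega> > 0"
    and tail: "\<And>x. ((\<lambda>u. u powr \<alpha> * measure M {\<omega> \<in> space M. \<tau> x \<omega> \<ge> u}) \<longlongrightarrow> 1) at_top"
  shows "\<exists>h :: nat \<Rightarrow> real. (h \<longlonglongrightarrow> 0) \<and> (\<forall>n. h n > 0) \<and>
    (AE \<omega> in M.
      (\<lambda>n. SUP u \<in> {\<epsilon>..<Mx} \<inter> range (\<lambda>k::int. h n * of_int k).
          \<bar>real (card (T_set \<kappa> (\<lambda>x. \<tau> x \<omega>) u (ereal (u + h n)) n)) / (h n * real n powr (1 - \<alpha> * \<kappa>))
            - \<alpha> * u powr (- \<alpha> - 1)\<bar>) \<longlonglongrightarrow> 0)"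
proof -
  interpret prob_space M
    by fact
  have "\<alpha> * \<kappa> < 1"
    using assms(2,4) by (simp add: field_simps)
  then interpret iid_power_tail M \<tau> \<alpha> \<kappa>
    using assms(2,3) indep tail[of 0] by unfold_locales (auto intro: ident)
  define \<gamma> where "\<gamma> = (1 - \<alpha> * \<kappa>) / 4"
  have "0 < \<gamma>" "3 * \<gamma> < 1 - \<alpha> * \<kappa>"
    using \<open>\<alpha> * \<kappa> < 1\<close> by (simp_all add: \<gamma>_def)
  obtain h where mesh_lower: "\<And>n. (real n + 1) powr (- \<gamma>) \<le> h n" and "h \<longlonglongrightarrow> 0"
    and "(\<lambda>n. tail_deviation \<epsilon> n / h n) \<longlonglongrightarrow> 0"
    using mesh_sequence_exists[OF tail_deviation_nonneg tendsto_tail_deviation[OF assms(5)] \<open>0 < \<gamma>\<close>]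
    by blast
  have "0 < h n" for n
    using mesh_lower[of n] by (rule less_le_trans[rotated]) simp
  with \<open>h \<longlonglongrightarrow> 0\<close> AE_tendsto_window_density[OF assms(5,6) \<open>0 < \<gamma>\<close> \<open>3 * \<gamma> < 1 - \<alpha> * \<kappa>\<close> mesh_lower
      \<open>h \<longlonglongrightarrow> 0\<close> \<open>(\<lambda>n. tail_deviation \<epsilon> n / h n) \<longlonglongrightarrow> 0\<close>]
  show ?thesis
    by blast
qed

end
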